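(* For any real numbers $\theta>0$, $\epsilon\in(0,1)$ and $q\geq 1$, there exists $c>0$ depending only on $\theta,\epsilon,q$ such that the following holds. For any positive integer $r\leq \frac{c\log n}{\log\log n}$, if the number of items satisfies $m\in[rn+n^\epsilon,(r+1)n-n^\epsilon]$ and the utilities $u_i(j)$ ($i\in[n]$, $j\in[m]$) are drawn independently from a distribution $\mathcal{U}$ on $[0,1]$ that is $(\theta,q)$-polynomially bounded below at 1, then with high probability there is no envy-free allocation of the $m$ items among the $n$ agents.
   Context: There is a set $N=[n]$ of agents and a set $M=[m]$ of indivisible items. Agent $i$ has utility $u_i(j)\in[0,1]$ for item $j$, and utilities are additive: $u_i(M')=\sum_{j\in M'}u_i(j)$. An allocation is a partition $(M_1,\dots,M_n)$ of $M$, with $M_i$ given to agent $i$; it is envy-free if $u_i(M_i)\geq u_i(M_{i'})$ for all $i,i'\in N$. A distribution $\mathcal{U}$ on $[0,1]$ is $(\theta,q)$-polynomially bounded below at 1 if for every $\alpha\in(0,1]$, $\Pr_{u\sim\mathcal{U}}[u>1-\alpha]\geq\theta\alpha^q$. "With high probability" means with probability tending to 1 as $n\to\infty$; $\log$ is the natural logarithm. *)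

theory Defs
  imports "HOL-Probability.Probability"
begin

text \<open>Utilities are a function u on pairs (agent i, item j), u (i,j) = u_i(j). An allocation maps each item j<m to an agent a j < n;
  agent i receives the bundle {j<m. a j = i}.\<close>

definition envy_free :: "nat \<Rightarrow> nat \<Rightarrow> (nat \<times> nat \<Rightarrow> real) \<Rightarrow> (nat \<Rightarrow> nat) \<Rightarrow> bool" where
  "envy_free n m u a \<longleftrightarrow>
     (\<forall>j<m. a j < n) \<and>
     (\<forall>i<n. \<forall>i'<n. (\<Sum>j\<in>{j. j < m \<and> a j = i'}. u (i, j)) \<le> (\<Sum>j\<in>{j. j < m \<and> a j = i}. u (i, j)))"

definition poly_bounded_below_at_1 :: "real \<Rightarrow> real \<Rightarrow> real measure \<Rightarrow> bool" where
  "poly_bounded_below_at_1 \<theta> q U \<longleftrightarrow>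
     (\<forall>\<alpha>::real. 0 < \<alpha> \<and> \<alpha> \<le> 1 \<longrightarrow> \<theta> * \<alpha> powr q \<le> measure U {x. x > 1 - \<alpha>})"

definition util_space :: "real measure \<Rightarrow> nat \<Rightarrow> nat \<Rightarrow> (nat \<times> nat \<Rightarrow> real) measure" where
  "util_space U n m = PiM ({..<n} \<times> {..<m}) (\<lambda>_. U)"

end

theory Submission
  imports Defs "HOL-Real_Asymp.Real_Asymp"
begin

text \<open>Fix an allocation and call an agent low if it receives at most r items. A low agent who
  values every item of some (r + 1)-element subset of another bundle above 1 - 1/(r + 1) values that
  subset above r, hence above its own bundle, and envies. Cutting the bundles of the other agents
  into disjoint blocks of r + 1 items, the constraints on m force (number of low agents) * (number of
  blocks) \<ge> n^(1 + \<epsilon>) / (4 (r + 1)^2). The events "low agent i does not value every item of block S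
  highly" are independent, each of probability 1 - p^(r + 1) with p = P(u > 1 - 1/(r + 1)), and
  p^(r + 1) \<ge> n^(-\<epsilon>/2) by the polynomial bound at 1 because r = O(log n / log log n). Hence a fixed
  allocation is envy-free with probability at most exp(- n^(1 + \<epsilon>/2) / (4 log^2 n)), which beats
  the union bound over the n^m \<le> exp(n log^2 n) allocations.\<close>

lemma indep_vars_PiM_components:
  assumes "\<And>i. prob_space (M i)" and "I \<noteq> {}" and "finite I"
  shows "prob_space.indep_vars (PiM I M) M (\<lambda>i \<omega>. \<omega> i) I"
proof -
  interpret product_prob_space M I
    using assms(1) by (rule product_prob_spaceI)
  have "distr (PiM I M) (PiM I M) (\<lambda>\<omega>. \<lambda>i\<in>I. \<omega> i) = PiM I M"
    using distr_restrict[of I I] assms(3) by simp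
  also have "\<dots> = (\<Pi>\<^sub>M i\<in>I. distr (PiM I M) (M i) (\<lambda>\<omega>. \<omega> i))"
    by (intro PiM_cong refl) (simp add: PiM_component)
  finally show ?thesis
    by (subst P.indep_vars_iff_distr_eq_PiM'[OF assms(2)]) auto
qed

lemma prob_PiM_INT_restrict_vimage:
  fixes K :: "'k \<Rightarrow> 'i set"
  assumes M: "\<And>i. prob_space (M i)" and I: "finite I" and J: "finite J" "J \<noteq> {}"
    and KI: "\<And>k. k \<in> J \<Longrightarrow> K k \<subseteq> I" and K_ne: "\<And>k. k \<in> J \<Longrightarrow> K k \<noteq> {}"
    and disj: "disjoint_family_on K J" and B: "\<And>k. k \<in> J \<Longrightarrow> B k \<in> sets (PiM (K k) M)"
  defines "A k \<equiv> (\<lambda>\<omega>. restrict \<omega> (K k)) -` B k \<inter> space (PiM I M)"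
  shows "measure (PiM I M) (\<Inter>k\<in>J. A k) = (\<Prod>k\<in>J. measure (PiM I M) (A k))"
proof -
  interpret product_prob_space M I
    using M by (rule product_prob_spaceI)
  have "I \<noteq> {}"
    using J KI K_ne by blast
  then have "P.indep_vars (\<lambda>k. PiM (K k) M) (\<lambda>k \<omega>. restrict \<omega> (K k)) J"
    using P.indep_vars_restrict[OF indep_vars_PiM_components[OF M _ I] KI disj] by simp
  then show ?thesis
    unfolding P.indep_vars_def
  proof (elim conjE P.indep_setsD[OF _ order_refl J(2,1)])
    show "\<forall>k\<in>J. A k \<in> sigma_sets (space (PiM I M))
        {(\<lambda>\<omega>. restrict \<omega> (K k)) -` X \<inter> space (PiM I M) | X. X \<in> sets (PiM (K k) M)}"
      unfolding A_def using B by (intro ballI sigma_sets.Basic) blast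
  qed
qed

lemma
  fixes U :: "'a measure" and K :: "'k \<Rightarrow> 'i set"
  assumes U: "prob_space U" and G: "G \<in> sets U" and I: "finite I" and J: "finite J"
    and KI: "\<And>k. k \<in> J \<Longrightarrow> K k \<subseteq> I" and K_ne: "\<And>k. k \<in> J \<Longrightarrow> K k \<noteq> {}"
    and disj: "disjoint_family_on K J"
  defines "E \<equiv> {\<omega> \<in> space (PiM I (\<lambda>_. U)). \<forall>k\<in>J. \<exists>x\<in>K k. \<omega> x \<notin> G}"
  shows sets_PiM_every_block_misses: "E \<in> sets (PiM I (\<lambda>_. U))"
    and prob_PiM_every_block_misses: "measure (PiM I (\<lambda>_. U)) E = (\<Prod>k\<in>J. 1 - measure U G ^ card (K k))"
proof -
  interpret product_prob_space "\<lambda>_. U" I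
    using U by (rule product_prob_spaceI)
  define A where "A k = {\<omega> \<in> space (PiM I (\<lambda>_. U)). \<exists>x\<in>K k. \<omega> x \<notin> G}" for k
  define B where "B k = space (PiM (K k) (\<lambda>_. U)) - PiE (K k) (\<lambda>_. G)" for k
  have fin_K: "finite (K k)" if "k \<in> J" for k
    using finite_subset[OF KI[OF that] I] .
  have A_restrict: "A k = (\<lambda>\<omega>. restrict \<omega> (K k)) -` B k \<inter> space (PiM I (\<lambda>_. U))" if "k \<in> J" for k
    using KI[OF that] unfolding A_def B_def space_PiM PiE_def Pi_def subset_eq
    by (auto simp del: split_paired_All split_paired_Ex)
  have B: "B k \<in> sets (PiM (K k) (\<lambda>_. U))" if "k \<in> J" for k
    unfolding B_def using G fin_K[OF that] by (intro sets.Diff sets.top sets_PiM_I_finite) auto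
  have A: "A k \<in> P.events" if "k \<in> J" for k
    unfolding A_restrict[OF that] by (rule measurable_sets[OF measurable_restrict_subset[OF KI[OF that]] B[OF that]])
  have E_eq: "E = space (PiM I (\<lambda>_. U)) \<inter> (\<Inter>k\<in>J. A k)"
    unfolding E_def A_def by auto
  show "E \<in> P.events"
    unfolding E_eq using A J by (cases "J = {}") auto
  have prob_A: "P.prob (A k) = 1 - measure U G ^ card (K k)" if "k \<in> J" for k
  proof -
    have "space (PiM I (\<lambda>_. U)) - A k = {\<omega> \<in> space (PiM I (\<lambda>_. U)). \<forall>x\<in>K k. \<omega> x \<in> G}"
      unfolding A_def by auto
    moreover have "emeasure (PiM I (\<lambda>_. U)) {\<omega> \<in> space (PiM I (\<lambda>_. U)). \<forall>x\<in>K k. \<omega> x \<in> G}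
        = ennreal (measure U G) ^ card (K k)"
      using emeasure_PiM_Collect[OF KI[OF that] fin_K[OF that], of "\<lambda>_. G"] G
      by (simp add: M.emeasure_eq_measure)
    ultimately have "P.prob (space (PiM I (\<lambda>_. U)) - A k) = measure U G ^ card (K k)"
      by (simp add: P.emeasure_eq_measure ennreal_power)
    then show ?thesis
      using P.prob_compl[OF A[OF that]] by simp
  qed
  show "P.prob E = (\<Prod>k\<in>J. 1 - measure U G ^ card (K k))"
  proof (cases "J = {}")
    case True
    then show ?thesis unfolding E_def by (simp add: P.prob_space)
  next
    case False
    then have "E = (\<Inter>k\<in>J. A k)"
      unfolding E_eq by (auto simp: A_def)
    then show ?thesis
      using prob_PiM_INT_restrict_vimage[OF U I J False KI K_ne disj B] A_restrict prob_A by simp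
  qed
qed

lemma exists_disjoint_subsets_card:
  assumes "finite B" and "0 < d"
  shows "\<exists>\<S>. \<S> \<subseteq> {S. S \<subseteq> B \<and> card S = d} \<and> disjoint \<S> \<and> card \<S> = card B div d"
  using assms(1)
proof (induction "card B" arbitrary: B rule: less_induct)
  case less
  show ?case
  proof (cases "card B < d")
    case True
    then show ?thesis by (intro exI[of _ "{}"]) auto
  next
    case False
    then obtain S where S: "S \<subseteq> B" "card S = d"
      by (meson not_less obtain_subset_with_card_n)
    then have "S \<noteq> {}" and "card (B - S) = card B - d"
      using assms(2) less.prems by (auto simp: card_Diff_subset finite_subset)
    then obtain \<S> where \<S>: "\<S> \<subseteq> {T. T \<subseteq> B - S \<and> card T = d}" "disjoint \<S>" "card \<S> = (card B - d) div d"
      using less.hyps[of "B - S"] less.prems assms(2) False by fastforce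
    have "finite \<S>"
      using \<S>(1) less.prems by (auto intro: finite_subset[of _ "Pow B"])
    moreover have "S \<notin> \<S>"
      using \<S>(1) \<open>S \<noteq> {}\<close> by blast
    moreover have "Suc ((card B - d) div d) = card B div d"
      using False assms(2) by (simp add: le_div_geq)
    ultimately show ?thesis
      using S \<S> by (intro exI[of _ "insert S \<S>"]) (auto simp: pairwise_insert disjnt_def)
  qed
qed

lemma exists_disjoint_blocks_within_parts:
  fixes A :: "'i \<Rightarrow> 'a set"
  assumes H: "finite H" and fin_A: "\<And>h. h \<in> H \<Longrightarrow> finite (A h)"
    and disj_A: "disjoint_family_on A H" and d: "0 < d"
  shows "\<exists>\<S>. finite \<S> \<and> disjoint \<S> \<and> (\<forall>S\<in>\<S>. card S = d \<and> (\<exists>h\<in>H. S \<subseteq> A h))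
    \<and> card \<S> = (\<Sum>h\<in>H. card (A h) div d)"
proof -
  have "\<forall>h\<in>H. \<exists>\<S>. \<S> \<subseteq> {S. S \<subseteq> A h \<and> card S = d} \<and> disjoint \<S> \<and> card \<S> = card (A h) div d"
    using exists_disjoint_subsets_card[OF fin_A d] by blast
  then obtain F where F: "\<And>h. h \<in> H \<Longrightarrow>
      F h \<subseteq> {S. S \<subseteq> A h \<and> card S = d} \<and> disjoint (F h) \<and> card (F h) = card (A h) div d"
    by metis
  then have F_sub: "\<And>h S. h \<in> H \<Longrightarrow> S \<in> F h \<Longrightarrow> S \<subseteq> A h \<and> card S = d"
    by blast
  have fin_F: "finite (F h)" if "h \<in> H" for h
    using F_sub[OF that] fin_A[OF that] by (auto intro: finite_subset[of _ "Pow (A h)"])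
  have "disjoint_family_on F H"
    unfolding disjoint_family_on_def
  proof (intro ballI impI)
    fix h h' assume "h \<in> H" "h' \<in> H" "h \<noteq> h'"
    then have "A h \<inter> A h' = {}"
      using disj_A by (simp add: disjoint_family_on_def)
    show "F h \<inter> F h' = {}"
    proof (rule ccontr)
      assume "F h \<inter> F h' \<noteq> {}"
      then obtain S where "S \<in> F h" "S \<in> F h'" by blast
      then have "S = {}" and "card S = d"
        using F_sub \<open>h \<in> H\<close> \<open>h' \<in> H\<close> \<open>A h \<inter> A h' = {}\<close> by blast+
      then show False using d by simp
    qed
  qed
  then have "card (\<Union>h\<in>H. F h) = (\<Sum>h\<in>H. card (A h) div d)"
    using card_UN_disjoint'[OF _ fin_F H] F by simp
  moreover have "disjoint (\<Union>h\<in>H. F h)"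
  proof (rule disjoint_UN)
    show "disjoint_family_on (\<lambda>h. \<Union> (F h)) H"
      using F_sub disj_A unfolding disjoint_family_on_def by blast
  qed (use F in blast)
  moreover have "\<forall>S\<in>(\<Union>h\<in>H. F h). card S = d \<and> (\<exists>h\<in>H. S \<subseteq> A h)"
    using F_sub by blast
  ultimately show ?thesis
    using H fin_F by (intro exI[of _ "\<Union>h\<in>H. F h"]) auto
qed

lemma low_high_product_ge:
  fixes l n r W X :: real
  assumes r: "1 \<le> r" and W: "0 \<le> W" and l: "0 \<le> l" "l \<le> n"
    and X: "r * (n - l) + W \<le> X" and W_le: "W \<le> (r + 1) * l"
  shows "W * n \<le> 2 * (r + 1) * (l * X)"
proof (cases "n \<le> 2 * l")
  case True
  have "W \<le> X"
    using X mult_nonneg_nonneg[of r "n - l"] r l by linarith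
  have "W * n \<le> 2 * (l * W)"
    using mult_left_mono[OF True W] by (simp add: algebra_simps)
  also have "\<dots> \<le> 2 * (l * X)"
    using \<open>W \<le> X\<close> l by (simp add: mult_left_mono)
  also have "\<dots> \<le> 2 * (r + 1) * (l * X)"
    using \<open>W \<le> X\<close> W l r by (intro mult_right_mono) auto
  finally show ?thesis .
next
  case False
  have "n - l \<le> r * (n - l)"
    using mult_right_mono[OF r, of "n - l"] l by simp
  then have "n / 2 \<le> X"
    using False X W by linarith
  moreover have "W / (r + 1) \<le> l"
    using W_le r by (simp add: divide_le_eq mult.commute)
  ultimately have "W / (r + 1) * (n / 2) \<le> l * X"
    using W r l by (intro mult_mono) auto
  then show ?thesis
    using r by (simp add: field_simps)
qed

lemma envy_free_imp_block_has_low_value: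
  assumes ef: "envy_free n m u a" and i: "i < n" and h: "h < n"
    and S: "S \<subseteq> {j. j < m \<and> a j = h}" and card_lt: "card {j. j < m \<and> a j = i} < card S"
    and u01: "\<And>j. j < m \<Longrightarrow> 0 \<le> u (i, j) \<and> u (i, j) \<le> 1"
  shows "\<exists>j\<in>S. u (i, j) \<le> 1 - 1 / card S"
proof (rule ccontr)
  assume "\<not> ?thesis"
  then have large: "\<And>j. j \<in> S \<Longrightarrow> 1 - 1 / card S < u (i, j)"
    by force
  have "finite S" "S \<noteq> {}"
    using card_lt by (auto intro: card_ge_0_finite)
  have "real (card S) - 1 = (\<Sum>j\<in>S. 1 - 1 / card S)"
    using \<open>S \<noteq> {}\<close> \<open>finite S\<close> by (simp add: field_simps)
  also have "\<dots> < (\<Sum>j\<in>S. u (i, j))"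
    using large \<open>finite S\<close> \<open>S \<noteq> {}\<close> by (rule sum_strict_mono[rotated 2])
  also have "\<dots> \<le> (\<Sum>j\<in>{j. j < m \<and> a j = h}. u (i, j))"
    using S u01 by (intro sum_mono2) auto
  also have "\<dots> \<le> (\<Sum>j\<in>{j. j < m \<and> a j = i}. u (i, j))"
    using ef i h unfolding envy_free_def by blast
  also have "\<dots> \<le> real (card {j. j < m \<and> a j = i})"
    using u01 sum_bounded_above[of "{j. j < m \<and> a j = i}" "\<lambda>j. u (i, j)" 1] by auto
  finally show False
    using card_lt by linarith
qed

lemma card_low_mult_blocks_ge:
  fixes k :: "nat \<Rightarrow> nat" and r n m :: nat and W :: real
  assumes r: "1 \<le> r" and W: "0 \<le> W" and sum_k: "(\<Sum>i<n. k i) = m"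
    and m_ge: "real (r * n) + W \<le> real m" and m_le: "real m \<le> real ((r + 1) * n) - W"
  shows "W * n \<le> 4 * (r + 1)^2 * real (card {i. i < n \<and> k i \<le> r} * (\<Sum>h | h < n \<and> r < k h. k h div (r + 1)))"
proof -
  define d where "d = r + 1"
  define L where "L = {i. i < n \<and> k i \<le> r}"
  define H where "H = {i. i < n \<and> r < k i}"
  define X where "X = (\<Sum>h\<in>H. k h)"
  define T where "T = (\<Sum>h\<in>H. k h div d)"
  have part: "{..<n} = L \<union> H" "L \<inter> H = {}" "finite L" "finite H"
    unfolding L_def H_def by auto
  then have m_split: "m = X + (\<Sum>i\<in>L. k i)"
    unfolding sum_k[symmetric] X_def by (simp add: sum.union_disjoint)
  have card_H: "card L + card H = n"
    using card_Un_disjoint[OF part(3,4,2)] part(1) by (metis card_lessThan)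
  have "(\<Sum>i\<in>L. k i) \<le> r * card L"
    using sum_bounded_above[of L k r] by (simp add: L_def mult.commute)
  then have "m \<le> X + r * card L"
    using m_split by simp
  then have X_ge: "r * (real n - card L) + W \<le> X"
    using m_ge by (simp add: algebra_simps flip: of_nat_mult of_nat_add)
  have "d * card H \<le> X"
    using sum_bounded_below[of H d k] by (simp add: H_def d_def X_def mult.commute)
  moreover have "(r + 1) * n = (r + 1) * card L + d * card H"
    unfolding d_def card_H[symmetric] by (simp add: algebra_simps)
  ultimately have "(r + 1) * n \<le> m + (r + 1) * card L"
    using m_split by linarith
  then have "real ((r + 1) * n) \<le> real m + real ((r + 1) * card L)"
    by (simp only: of_nat_add[symmetric] of_nat_le_iff)
  then have W_le: "W \<le> (real r + 1) * real (card L)"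
    using m_le by (simp add: algebra_simps)
  have "k h \<le> 2 * (d * (k h div d))" if "h \<in> H" for h
  proof -
    have "d \<le> k h" using that by (simp add: H_def d_def)
    then have "1 \<le> k h div d"
      using div_le_mono[of d "k h" d] by (simp add: d_def)
    then have "d \<le> d * (k h div d)"
      by simp
    moreover have "k h mod d < d"
      by (simp add: d_def)
    ultimately show ?thesis
      using mult_div_mod_eq[of d "k h"] by linarith
  qed
  then have "X \<le> 2 * d * T"
    unfolding X_def T_def sum_distrib_left mult.assoc by (rule sum_mono)
  have "card L \<le> n"
    by (rule card_mono[of "{..<n}", simplified]) (auto simp: L_def)
  have "W * n \<le> 2 * d * (card L * real X)"
    using low_high_product_ge[OF _ W _ _ X_ge W_le] r \<open>card L \<le> n\<close> by (simp add: d_def add.commute)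
  also have "\<dots> \<le> 2 * d * (card L * (2 * d * real T))"
    using \<open>X \<le> 2 * d * T\<close> by (intro mult_left_mono) (simp_all flip: of_nat_mult)
  finally show ?thesis
    by (simp add: L_def H_def T_def d_def power2_eq_square algebra_simps)
qed

lemma prob_envy_free_le_blocks:
  fixes U :: "real measure" and L :: "nat set" and \<S> :: "nat set set"
  assumes U: "prob_space U" and sU: "sets U = sets borel" and U01: "measure U {0..1} = 1"
    and L: "\<And>i. i \<in> L \<Longrightarrow> i < n \<and> card {j. j < m \<and> a j = i} < d"
    and \<S>: "finite \<S>" "disjoint \<S>" "\<And>S. S \<in> \<S> \<Longrightarrow> card S = d \<and> (\<exists>h<n. S \<subseteq> {j. j < m \<and> a j = h})"
    and d: "0 < d"
  shows "measure (util_space U n m) {u \<in> space (util_space U n m). envy_free n m u a}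
    \<le> (1 - measure U {x. 1 - 1 / d < x} ^ d) ^ (card L * card \<S>)"
proof -
  define I where "I = {..<n} \<times> {..<m}"
  define G where "G = {x. 1 - 1 / d < x}"
  define J where "J = L \<times> \<S>"
  define K where "K k = {fst k} \<times> snd k" for k :: "nat \<times> nat set"
  let ?P = "PiM I (\<lambda>_. U)"
  define Miss where "Miss = {u \<in> space ?P. \<forall>k\<in>J. \<exists>x\<in>K k. u x \<notin> G}"
  interpret product_prob_space "\<lambda>_. U" I
    using U by (rule product_prob_spaceI)
  have G: "G \<in> sets U"
    by (simp add: sU G_def)
  have "finite L"
    using L by (auto intro: finite_subset[of _ "{..<n}"])
  then have J: "finite J" "\<And>k. k \<in> J \<Longrightarrow> K k \<subseteq> I" "\<And>k. k \<in> J \<Longrightarrow> K k \<noteq> {}"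
    "\<And>k. k \<in> J \<Longrightarrow> card (K k) = d" "disjoint_family_on K J"
    using \<S> L d by (fastforce simp: J_def K_def I_def card_cartesian_product
        disjoint_family_on_def disjoint_def)+
  have Miss: "Miss \<in> sets ?P" "measure ?P Miss = (1 - measure U G ^ d) ^ (card L * card \<S>)"
    using sets_PiM_every_block_misses[OF U G _ J(1-3,5)] prob_PiM_every_block_misses[OF U G _ J(1-3,5)]
    by (simp_all add: Miss_def I_def J(4) J_def card_cartesian_product)
  have "AE u in ?P. \<forall>x\<in>I. u x \<in> {0..1}"
    using prob_space.AE_prob_1[OF U U01]
    by (intro AE_finite_allI AE_component) (auto simp: I_def)
  then have "AE u in ?P. envy_free n m u a \<longrightarrow> u \<in> Miss"
    using AE_space
  proof eventually_elim
    case (elim u)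
    have "\<exists>x\<in>K k. u x \<notin> G" if ef: "envy_free n m u a" and "k \<in> J" for k
    proof -
      obtain i S where k: "k = (i, S)" "i \<in> L" "S \<in> \<S>"
        using \<open>k \<in> J\<close> by (auto simp: J_def)
      obtain h where "h < n" "S \<subseteq> {j. j < m \<and> a j = h}" "card S = d"
        using \<S>(3)[OF k(3)] by auto
      then have "\<exists>j\<in>S. u (i, j) \<le> 1 - 1 / card S"
        using L[OF k(2)] elim(1)
        by (intro envy_free_imp_block_has_low_value[OF ef]) (auto simp: I_def)
      then show ?thesis
        by (force simp: k K_def G_def \<open>card S = d\<close>)
    qed
    then show ?case
      using elim(2) by (simp add: Miss_def)
  qed
  then have "measure ?P {u \<in> space ?P. envy_free n m u a} \<le> measure ?P Miss"
    using P.finite_measure_mono_AE[OF _ Miss(1)] by simp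
  then show ?thesis
    unfolding util_space_def I_def[symmetric] Miss(2) G_def by simp
qed

lemma prob_envy_free_le:
  fixes U :: "real measure" and n m r :: nat and W :: real and a :: "nat \<Rightarrow> nat"
  assumes U: "prob_space U" and sU: "sets U = sets borel" and U01: "measure U {0..1} = 1"
    and r: "1 \<le> r" and W: "0 \<le> W"
    and m_ge: "real (r * n) + W \<le> real m" and m_le: "real m \<le> real ((r + 1) * n) - W"
  shows "measure (util_space U n m) {u \<in> space (util_space U n m). envy_free n m u a}
    \<le> exp (- (measure U {x. 1 - 1 / (r + 1) < x} ^ (r + 1) * W * n / (4 * real (r + 1) ^ 2)))"
proof (cases "\<forall>j<m. a j < n")
  case False
  then have "{u \<in> space (util_space U n m). envy_free n m u a} = {}"
    by (auto simp: envy_free_def)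
  then show ?thesis by (simp only: measure_empty exp_gt_zero less_imp_le)
next
  case True
  define d where "d = r + 1"
  define B where "B i = {j. j < m \<and> a j = i}" for i
  define L where "L = {i. i < n \<and> card (B i) \<le> r}"
  define H where "H = {i. i < n \<and> r < card (B i)}"
  define \<beta> where "\<beta> = measure U {x. 1 - 1 / d < x} ^ d"
  have "disjoint_family_on B H"
    unfolding disjoint_family_on_def B_def by auto
  then obtain \<S> where
      \<S>: "finite \<S>" "disjoint \<S>" "\<And>S. S \<in> \<S> \<Longrightarrow> card S = d \<and> (\<exists>h\<in>H. S \<subseteq> B h)"
    and card_\<S>: "card \<S> = (\<Sum>h\<in>H. card (B h) div d)"
    using exists_disjoint_blocks_within_parts[of H B d] by (auto simp: H_def B_def d_def)
  have "(\<Sum>i<n. card (B i)) = card (\<Union>i<n. B i)"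
    by (rule card_UN_disjoint[symmetric]) (auto simp: B_def)
  also have "(\<Union>i<n. B i) = {..<m}"
    using True by (auto simp: B_def)
  finally have count: "W * n \<le> 4 * real d ^ 2 * real (card L * card \<S>)"
    using card_low_mult_blocks_ge[OF r W _ m_ge m_le, of "\<lambda>i. card (B i)"]
    by (simp add: card_\<S> L_def H_def d_def)
  have \<beta>: "0 \<le> \<beta>" "\<beta> \<le> 1"
    unfolding \<beta>_def using prob_space.prob_le_1[OF U] by (simp_all add: power_le_one)
  have "measure (util_space U n m) {u \<in> space (util_space U n m). envy_free n m u a}
      \<le> (1 - \<beta>) ^ (card L * card \<S>)"
    unfolding \<beta>_def using \<S>
    by (intro prob_envy_free_le_blocks[OF U sU U01]) (auto simp: L_def H_def B_def d_def)
  also have "\<dots> \<le> exp (- \<beta>) ^ (card L * card \<S>)"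
    using \<beta> exp_ge_add_one_self[of "- \<beta>"] by (intro power_mono) auto
  also have "\<dots> = exp (- (\<beta> * real (card L * card \<S>)))"
    by (simp add: exp_of_nat_mult[symmetric] mult.commute)
  also have "\<dots> \<le> exp (- (\<beta> * W * n / (4 * real d ^ 2)))"
    using mult_left_mono[OF count \<beta>(1)] by (simp add: pos_divide_le_eq d_def mult_ac)
  finally show ?thesis
    unfolding \<beta>_def d_def by simp
qed

lemma sets_envy_free:
  assumes sU: "sets U = sets borel"
  shows "{u \<in> space (util_space U n m). envy_free n m u a} \<in> sets (util_space U n m)"
proof -
  let ?P = "util_space U n m"
  have "(\<lambda>u. \<Sum>j | j < m \<and> a j = i'. u (i, j)) \<in> borel_measurable ?P" if "i < n" for i i'
    using that measurable_cong_sets[OF refl sU] unfolding util_space_def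
    by (intro borel_measurable_sum) (auto intro: measurable_component_singleton)
  then have "{u \<in> space ?P. \<forall>i\<in>{..<n}. \<forall>i'\<in>{..<n}.
      (\<Sum>j | j < m \<and> a j = i'. u (i, j)) \<le> (\<Sum>j | j < m \<and> a j = i. u (i, j))} \<in> sets ?P"
    by (intro sets.sets_Collect_finite_All borel_measurable_le) auto
  moreover have "{u \<in> space ?P. envy_free n m u a} = {u \<in> space ?P. \<forall>j<m. a j < n} \<inter>
      {u \<in> space ?P. \<forall>i\<in>{..<n}. \<forall>i'\<in>{..<n}.
      (\<Sum>j | j < m \<and> a j = i'. u (i, j)) \<le> (\<Sum>j | j < m \<and> a j = i. u (i, j))}"
    by (auto simp: envy_free_def)
  ultimately show ?thesis
    by simp
qed

lemma envy_free_restrict: "envy_free n m u (restrict a {..<m}) = envy_free n m u a"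
proof -
  have "{j. j < m \<and> restrict a {..<m} j = i} = {j. j < m \<and> a j = i}" for i
    by auto
  then show ?thesis
    unfolding envy_free_def by simp
qed

lemma prob_no_envy_free_ge:
  fixes U :: "real measure"
  assumes U: "prob_space U" and sU: "sets U = sets borel"
    and bound: "\<And>a. measure (util_space U n m) {u \<in> space (util_space U n m). envy_free n m u a} \<le> p"
  shows "1 - real n ^ m * p
    \<le> measure (util_space U n m) {u \<in> space (util_space U n m). \<not> (\<exists>a. envy_free n m u a)}"
proof -
  let ?P = "util_space U n m"
  interpret prob_space ?P
    unfolding util_space_def by (simp add: U prob_space_PiM)
  define A where "A = {..<m} \<rightarrow>\<^sub>E {..<n}"
  define EF where "EF a = {u \<in> space ?P. envy_free n m u a}" for a
  have "(\<exists>a. envy_free n m u a) \<longleftrightarrow> (\<exists>a\<in>A. envy_free n m u a)" for u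
  proof
    assume "\<exists>a. envy_free n m u a"
    then obtain a where "envy_free n m u a" ..
    moreover from this have "restrict a {..<m} \<in> A"
      by (auto simp: A_def envy_free_def)
    ultimately show "\<exists>a\<in>A. envy_free n m u a"
      by (metis envy_free_restrict)
  qed blast
  then have "{u \<in> space ?P. \<not> (\<exists>a. envy_free n m u a)} = space ?P - (\<Union>a\<in>A. EF a)"
    by (auto simp: EF_def)
  moreover have "prob (\<Union>a\<in>A. EF a) \<le> real n ^ m * p"
  proof -
    have "prob (\<Union>a\<in>A. EF a) \<le> (\<Sum>a\<in>A. prob (EF a))"
      unfolding EF_def using sets_envy_free[OF sU]
      by (intro finite_measure_subadditive_finite) (auto simp: A_def finite_PiE)
    also have "\<dots> \<le> (\<Sum>a\<in>A. p)"
      by (intro sum_mono) (simp add: EF_def bound)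
    finally show ?thesis
      by (simp add: A_def card_PiE)
  qed
  moreover have "(\<Union>a\<in>A. EF a) \<in> events"
    unfolding EF_def using sets_envy_free[OF sU] by (intro sets.finite_UN) (auto simp: A_def finite_PiE)
  ultimately show ?thesis
    using prob_compl by simp
qed

lemma poly_tail_power_ge:
  fixes \<theta> q \<epsilon> b x :: real and d :: nat
  assumes \<theta>: "0 < \<theta>" and q: "0 \<le> q" and x: "1 < x" and d: "1 \<le> d" "d \<le> ln x"
    and d_le: "d \<le> b * ln x / ln (ln x)" and LL: "1 \<le> ln (ln x)"
    and bq: "b * q \<le> \<epsilon> / 4" and b\<theta>: "b * \<bar>ln \<theta>\<bar> \<le> \<epsilon> / 4 * ln (ln x)"
  shows "x powr (- \<epsilon> / 2) \<le> (\<theta> * (1 / d) powr q) ^ d"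
proof -
  define L where "L = ln x"
  have L: "0 < L"
    using x by (simp add: L_def)
  have "0 \<le> b * L / ln L"
    using d d_le by (simp add: L_def)
  have "ln d \<le> ln L"
    using d by (simp add: L_def)
  have "d * (q * ln d) \<le> (b * L / ln L) * (q * ln L)"
    using d_le \<open>ln d \<le> ln L\<close> \<open>0 \<le> b * L / ln L\<close> q d
    by (intro mult_mono mult_left_mono) (auto simp: L_def)
  also have "\<dots> = b * q * L"
    using LL by (simp add: L_def)
  also have "\<dots> \<le> \<epsilon> / 4 * L"
    using bq L by (intro mult_right_mono) auto
  finally have ln_d: "d * (q * ln d) \<le> \<epsilon> / 4 * L" .
  have "d * \<bar>ln \<theta>\<bar> \<le> (b * L / ln L) * \<bar>ln \<theta>\<bar>"
    using d_le by (intro mult_right_mono) (auto simp: L_def)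
  also have "\<dots> = L * (b * \<bar>ln \<theta>\<bar>) / ln L"
    by simp
  also have "\<dots> \<le> L * (\<epsilon> / 4 * ln L) / ln L"
    by (intro divide_right_mono mult_left_mono) (use b\<theta>[folded L_def] L LL[folded L_def] in linarith)+
  also have "\<dots> = \<epsilon> / 4 * L"
    using LL by (simp add: L_def)
  finally have "- (\<epsilon> / 2 * L) \<le> d * (ln \<theta> - q * ln d)"
    using ln_d abs_ge_minus_self[of "ln \<theta>"] mult_left_mono[of "- ln \<theta>" "\<bar>ln \<theta>\<bar>" "real d"]
    by (simp add: algebra_simps)
  moreover have "\<theta> * (1 / d) powr q = exp (ln \<theta> - q * ln d)"
    using \<theta> d by (simp add: powr_def exp_diff exp_minus divide_inverse ln_inverse)
  then have "(\<theta> * (1 / d) powr q) ^ d = exp (d * (ln \<theta> - q * ln d))"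
    by (simp add: exp_of_nat_mult[symmetric])
  ultimately show ?thesis
    using x by (simp add: powr_def L_def)
qed

lemma union_bound_exponent_le:
  fixes n m d :: nat and \<beta> \<epsilon> :: real
  assumes n: "1 < n" and d: "1 \<le> d" "d \<le> ln n" and m: "m \<le> d * n"
    and \<beta>: "n powr (- \<epsilon> / 2) \<le> \<beta>"
  shows "real n ^ m * exp (- (\<beta> * n powr \<epsilon> * n / (4 * real d ^ 2)))
    \<le> exp (n * ln n ^ 2 - n powr (1 + \<epsilon> / 2) / (4 * ln n ^ 2))"
proof -
  have "real m * ln n \<le> (ln n * n) * ln n"
    using m d n by (intro mult_right_mono) (auto intro: order_trans[OF of_nat_mono[OF m]] mult_right_mono)
  have "real n ^ m = exp (m * ln n)"
    using n by (simp add: exp_of_nat_mult)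
  also have "\<dots> \<le> exp (n * ln n ^ 2)"
    using \<open>real m * ln n \<le> (ln n * n) * ln n\<close> by (simp add: power2_eq_square mult_ac)
  finally have "real n ^ m \<le> exp (n * ln n ^ 2)" .
  moreover have "n powr (1 + \<epsilon> / 2) / (4 * ln n ^ 2) \<le> \<beta> * n powr \<epsilon> * n / (4 * real d ^ 2)"
  proof -
    have "n powr (1 + \<epsilon> / 2) = n powr (- \<epsilon> / 2 + \<epsilon> + 1)"
      by (rule arg_cong[where f = "\<lambda>t. n powr t"]) simp
    also have "\<dots> = n powr (- \<epsilon> / 2) * n powr \<epsilon> * n"
      using n by (simp only: powr_add) simp
    also have "\<dots> \<le> \<beta> * n powr \<epsilon> * n"
      using \<beta> by (intro mult_right_mono) auto
    finally have "n powr (1 + \<epsilon> / 2) \<le> \<beta> * n powr \<epsilon> * n" .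
    moreover have "0 \<le> \<beta> * n powr \<epsilon> * n"
      using calculation powr_ge_zero[of n "1 + \<epsilon> / 2"] by linarith
    ultimately show ?thesis
      using d n by (intro frac_le) (auto intro: power_mono)
  qed
  ultimately have "real n ^ m * exp (- (\<beta> * n powr \<epsilon> * n / (4 * real d ^ 2)))
      \<le> exp (n * ln n ^ 2) * exp (- (n powr (1 + \<epsilon> / 2) / (4 * ln n ^ 2)))"
    by (intro mult_mono) auto
  then show ?thesis
    by (simp add: exp_add[symmetric])
qed

lemma prob_no_envy_free_lower_bound:
  fixes U :: "real measure" and n m r :: nat and \<theta> q \<epsilon> c :: real
  assumes U: "prob_space U" and sU: "sets U = sets borel" and U01: "measure U {0..1} = 1"
    and tail: "poly_bounded_below_at_1 \<theta> q U" and \<theta>: "0 < \<theta>" and q: "0 \<le> q"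
    and c: "2 * c \<le> 1" "2 * c * q \<le> \<epsilon> / 4"
    and n: "1 < n" "1 \<le> ln (ln n)" "8 * c * \<bar>ln \<theta>\<bar> \<le> \<epsilon> * ln (ln n)"
    and r: "1 \<le> r" "r \<le> c * ln n / ln (ln n)"
    and m_ge: "real (r * n) + n powr \<epsilon> \<le> real m" and m_le: "real m \<le> real ((r + 1) * n) - n powr \<epsilon>"
  shows "1 - exp (n * ln n ^ 2 - n powr (1 + \<epsilon> / 2) / (4 * ln n ^ 2))
    \<le> measure (util_space U n m) {u \<in> space (util_space U n m). \<not> (\<exists>a. envy_free n m u a)}"
proof -
  define d where "d = r + 1"
  define \<beta> where "\<beta> = measure U {x. 1 - 1 / d < x} ^ d"
  have d: "1 \<le> d" "d \<le> 2 * c * ln n / ln (ln n)"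
    using r by (auto simp: d_def)
  moreover have "2 * c * ln n / ln (ln n) \<le> ln n"
  proof -
    have "2 * c * ln n \<le> 1 * ln n" "1 * ln n \<le> ln (ln n) * ln n"
      using c(1) n(1,2) by (intro mult_right_mono; simp)+
    then have "2 * c * ln n \<le> ln n * ln (ln n)"
      by (simp add: mult.commute)
    then show ?thesis
      using n(2) by (simp add: divide_le_eq)
  qed
  ultimately have "d \<le> ln n"
    by linarith
  have "n powr (- \<epsilon> / 2) \<le> (\<theta> * (1 / d) powr q) ^ d"
    using d \<open>d \<le> ln n\<close> c n \<theta> q by (intro poly_tail_power_ge[where b = "2 * c"]) auto
  also have "\<dots> \<le> \<beta>"
    unfolding \<beta>_def using tail d \<theta> by (intro power_mono) (auto simp: poly_bounded_below_at_1_def)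
  finally have \<beta>: "n powr (- \<epsilon> / 2) \<le> \<beta>" .
  have "real m \<le> real (d * n)"
    using m_le powr_ge_zero[of n \<epsilon>] unfolding d_def by linarith
  then have "m \<le> d * n"
    by (simp only: of_nat_le_iff)
  have "1 - real n ^ m * exp (- (\<beta> * n powr \<epsilon> * n / (4 * real d ^ 2)))
      \<le> measure (util_space U n m) {u \<in> space (util_space U n m). \<not> (\<exists>a. envy_free n m u a)}"
    using prob_envy_free_le[OF U sU U01 r(1) _ m_ge m_le]
    by (intro prob_no_envy_free_ge[OF U sU]) (simp add: \<beta>_def d_def)
  moreover have "real n ^ m * exp (- (\<beta> * n powr \<epsilon> * n / (4 * real d ^ 2)))
      \<le> exp (n * ln n ^ 2 - n powr (1 + \<epsilon> / 2) / (4 * ln n ^ 2))"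
    using n(1) d(1) \<open>d \<le> ln n\<close> \<open>m \<le> d * n\<close> \<beta> by (rule union_bound_exponent_le)
  ultimately show ?thesis
    by linarith
qed

lemma prob_no_envy_free_tendsto_1:
  fixes U :: "real measure" and r m :: "nat \<Rightarrow> nat" and \<theta> q \<epsilon> c :: real
  assumes U: "prob_space U" and sU: "sets U = sets borel" and U01: "measure U {0..1} = 1"
    and tail: "poly_bounded_below_at_1 \<theta> q U" and \<theta>: "0 < \<theta>" and q: "0 \<le> q" and \<epsilon>: "0 < \<epsilon>"
    and c: "2 * c \<le> 1" "2 * c * q \<le> \<epsilon> / 4"
    and rm: "\<forall>\<^sub>F n in sequentially.
        1 \<le> r n \<and> real (r n) \<le> c * ln (real n) / ln (ln (real n)) \<and>
        real (r n * n) + real n powr \<epsilon> \<le> real (m n) \<and>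
        real (m n) \<le> real ((r n + 1) * n) - real n powr \<epsilon>"
  shows "((\<lambda>n. measure (util_space U n (m n))
      {u \<in> space (util_space U n (m n)). \<not> (\<exists>a. envy_free n (m n) u a)}) \<longlongrightarrow> 1) sequentially"
proof (rule tendsto_sandwich)
  have "filterlim (\<lambda>n::nat. ln (ln (real n))) at_top sequentially"
    by real_asymp
  then have "\<forall>\<^sub>F n in sequentially. 1 \<le> ln (ln (real n)) \<and> 8 * c * \<bar>ln \<theta>\<bar> / \<epsilon> \<le> ln (ln (real n))"
    unfolding filterlim_at_top by (auto intro: eventually_conj)
  then show "\<forall>\<^sub>F n in sequentially.
      1 - exp (n * ln n ^ 2 - n powr (1 + \<epsilon> / 2) / (4 * ln n ^ 2))
      \<le> measure (util_space U n (m n)) {u \<in> space (util_space U n (m n)). \<not> (\<exists>a. envy_free n (m n) u a)}"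
    using rm eventually_gt_at_top[of 1]
  proof eventually_elim
    case (elim n)
    then show ?case
      using \<epsilon> by (intro prob_no_envy_free_lower_bound[OF U sU U01 tail \<theta> q c]) (auto simp: divide_le_eq mult.commute)
  qed
  show "\<forall>\<^sub>F n in sequentially.
      measure (util_space U n (m n)) {u \<in> space (util_space U n (m n)). \<not> (\<exists>a. envy_free n (m n) u a)} \<le> 1"
    using U by (intro always_eventually allI prob_space.prob_le_1) (simp add: util_space_def prob_space_PiM)
  have "(\<lambda>n::nat. exp (n * ln n ^ 2 - n powr (1 + \<epsilon> / 2) / (4 * ln n ^ 2))) \<longlonglongrightarrow> 0"
    using \<epsilon> by real_asymp
  then show "(\<lambda>n::nat. 1 - exp (n * ln n ^ 2 - n powr (1 + \<epsilon> / 2) / (4 * ln n ^ 2))) \<longlonglongrightarrow> 1"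
    using tendsto_diff[OF tendsto_const, of _ 0 sequentially 1] by simp
qed (rule tendsto_const)

theorem theorem2:
  fixes \<theta> \<epsilon> q :: real
  assumes "\<theta> > 0" and "0 < \<epsilon>" and "\<epsilon> < 1" and "q \<ge> 1"
  shows "\<exists>c>0. \<forall>(U::real measure) (r::nat \<Rightarrow> nat) (m::nat \<Rightarrow> nat).
     prob_space U \<and> sets U = sets borel \<and> measure U {0..1} = 1 \<and>
     poly_bounded_below_at_1 \<theta> q U \<and>
     (\<forall>\<^sub>F n in sequentially.
        1 \<le> r n \<and> real (r n) \<le> c * ln (real n) / ln (ln (real n)) \<and>
        real (r n * n) + real n powr \<epsilon> \<le> real (m n) \<and>
        real (m n) \<le> real ((r n + 1) * n) - real n powr \<epsilon>)
     \<longrightarrow> ((\<lambda>n. measure (util_space U n (m n))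
              {u \<in> space (util_space U n (m n)). \<not> (\<exists>a. envy_free n (m n) u a)})
          \<longlongrightarrow> 1) sequentially"
proof -
  define c where "c = min (1 / 2) (\<epsilon> / (8 * q))"
  have c: "0 < c" "2 * c \<le> 1" "2 * c * q \<le> \<epsilon> / 4"
    using assms by (auto simp: c_def min_def field_simps)
  show ?thesis
    using prob_no_envy_free_tendsto_1[OF _ _ _ _ assms(1) _ assms(2) c(2,3)] assms(4) c(1)
    by (intro exI[of _ c]) auto
qed

end
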